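(* Let $\mathcal{S}=(U,\mathcal{P})$ be a relational schema with finite domain $U$, let $D=D^n\cup D^x$ be a database instance (split into endogenous tuples $D^n$ and exogenous tuples $D^x$), let $\mathcal{Q}$ be a Boolean first-order query, and let $\tau\in D^n$. Then the causal effect of $\tau$ on $\mathcal{Q}$ in $D$ satisfies $\mathcal{E}^D_{\tau,\mathcal{Q}}\geq 0$.
   Context: A database instance is a finite set of ground atoms (tuples) $P(c_1,\dots,c_n)$ with $P\in\mathcal{P}$ of arity $n$ and $c_i\in U$; it is partitioned as $D=D^n\cup D^x$ into endogenous and exogenous tuples. Lineage: for every potential tuple $\tau$ introduce a propositional variable $X_\tau$. The lineage $\Phi_{\mathcal{Q}}$ of a Boolean FO query is defined inductively: $\Phi_\tau:=X_\tau$ for an atom $\tau$; $\Phi_{a=a}:=\mathit{true}$; $\Phi_{a=b}:=\mathit{false}$ for distinct constants; $\Phi_{\mathcal{Q}_1\wedge\mathcal{Q}_2}:=\Phi_{\mathcal{Q}_1}\wedge\Phi_{\mathcal{Q}_2}$; $\Phi_{\mathcal{Q}_1\vee\mathcal{Q}_2}:=\Phi_{\mathcal{Q}_1}\vee\Phi_{\mathcal{Q}_2}$; $\Phi_{\exists x\,\mathcal{Q}}:=\bigvee_{c\in U}\Phi_{\mathcal{Q}[c/x]}$; $\Phi_{\neg\mathcal{Q}}:=\neg\Phi_{\mathcal{Q}}$. Assuming negation occurs only in front of variables, the $D$-lineage $\Phi_{\mathcal{Q}}(D)$ is obtained from $\Phi_{\mathcal{Q}}$ by replacing each positive occurrence of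 $X_\tau$ with $\tau\notin D$ by $\mathit{false}$, and each literal $\neg X_\tau$ with $\tau\in D$ by $\mathit{false}$. Standing assumptions: (a) no variable occurs both positively and negatively in $\Phi_{\mathcal{Q}}(D)$; (b) every $\tau\notin D$ whose variable occurs negatively in $\Phi_{\mathcal{Q}}(D)$ is regarded as endogenous. Let $\mathit{Var}(\Phi_{\mathcal{Q}}(D))$ be its set of variables; the exogenous ones (those of tuples in $D^x$) split into positively occurring ones $\mathit{Var}^{x,+}$ and negatively occurring ones $\mathit{Var}^{x,-}$. Probability space: $\Omega$ is the set of all truth assignments $\sigma:\mathit{Var}(\Phi_{\mathcal{Q}}(D))\to\{0,1\}$ with the uniform distribution $P$. The query is the random variable $\mathcal{Q}(\sigma)=1$ iff $\sigma\models\Phi_{\mathcal{Q}}(D)$. For a variable $X$ and $x\in\{0,1\}$, the event $\mathit{do}(X=x)$ is $\{\sigma\in\Omega:\sigma(X)=x\}$. For an endogenous $\tau$, $E(\mathcal{Q}\mid \mathit{do}(X_\tau=v))$ denotes the conditional expectation of $\mathcal{Q}$ given the intersection of $\mathit{do}(X_\tau=v)$ with all $\mathit{do}(X_{\tau'}=1)$ for $X_{\tau'}\in\mathit{Var}^{x,+}$ and all $\mathit{do}(X_{\tau'}=0)$ for $X_{\tau'}\in\mathit{Var}^{x,-}$. The causal effect of $\tau$ on $\mathcal{Q}$ in $D$ is $\mathcal{E}^D_{\tau,\mathcal{Q}}:=E(\mathcal{Q}\mid\mathit{do}(X_\tau=v))-E(\mathcal{Q}\mid\mathit{do}(X_\tau=1-v))$,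 where $v=1$ if $\tau\in D$ and $v=0$ if $\tau\notin D$. *)

theory Defs
  imports Complex_Main
begin

datatype 'c trm = TVar nat | TConst 'c

datatype ('p, 'c) query =
    QAtom 'p "'c trm list"
  | QEq "'c trm" "'c trm"
  | QConj "('p, 'c) query" "('p, 'c) query"
  | QDisj "('p, 'c) query" "('p, 'c) query"
  | QEx nat "('p, 'c) query"
  | QNeg "('p, 'c) query"

type_synonym ('p, 'c) tuple = "'p \<times> 'c list"

fun tvars :: "'c trm \<Rightarrow> nat set" where
  "tvars (TVar x) = {x}"
| "tvars (TConst c) = {}"

fun tconsts :: "'c trm \<Rightarrow> 'c set" where
  "tconsts (TVar x) = {}"
| "tconsts (TConst c) = {c}"

fun fv :: "('p, 'c) query \<Rightarrow> nat set" where
  "fv (QAtom p ts) = (\<Union>t\<in>set ts. tvars t)"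
| "fv (QEq s t) = tvars s \<union> tvars t"
| "fv (QConj a b) = fv a \<union> fv b"
| "fv (QDisj a b) = fv a \<union> fv b"
| "fv (QEx x a) = fv a - {x}"
| "fv (QNeg a) = fv a"

fun wf_query :: "'c set \<Rightarrow> 'p set \<Rightarrow> ('p \<Rightarrow> nat) \<Rightarrow> ('p, 'c) query \<Rightarrow> bool" where
  "wf_query U P ar (QAtom p ts) =
     (p \<in> P \<and> length ts = ar p \<and> (\<forall>t\<in>set ts. tconsts t \<subseteq> U))"
| "wf_query U P ar (QEq s t) = (tconsts s \<subseteq> U \<and> tconsts t \<subseteq> U)"
| "wf_query U P ar (QConj a b) = (wf_query U P ar a \<and> wf_query U P ar b)"
| "wf_query U P ar (QDisj a b) = (wf_query U P ar a \<and> wf_query U P ar b)"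
| "wf_query U P ar (QEx x a) = wf_query U P ar a"
| "wf_query U P ar (QNeg a) = wf_query U P ar a"

definition wf_tuple :: "'c set \<Rightarrow> 'p set \<Rightarrow> ('p \<Rightarrow> nat) \<Rightarrow> ('p, 'c) tuple \<Rightarrow> bool" where
  "wf_tuple U P ar \<tau> = (fst \<tau> \<in> P \<and> length (snd \<tau>) = ar (fst \<tau>) \<and> set (snd \<tau>) \<subseteq> U)"

datatype 'v pf = PTrue | PFalse | PVar 'v | PNot "'v pf" | PAnd "'v pf" "'v pf" | POr "'v pf" "'v pf"

fun peval :: "'v set \<Rightarrow> 'v pf \<Rightarrow> bool" where
  "peval S PTrue = True"
| "peval S PFalse = False"
| "peval S (PVar v) = (v \<in> S)"
| "peval S (PNot a) = (\<not> peval S a)"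
| "peval S (PAnd a b) = (peval S a \<and> peval S b)"
| "peval S (POr a b) = (peval S a \<or> peval S b)"

text \<open>Evaluation of terms under a partial assignment of query variables; this
  realises the substitution Q[c/x].\<close>
fun teval :: "(nat \<Rightarrow> 'c option) \<Rightarrow> 'c trm \<Rightarrow> 'c option" where
  "teval env (TVar x) = env x"
| "teval env (TConst c) = Some c"

definition ulist :: "'c set \<Rightarrow> 'c list" where
  "ulist U = (SOME xs. set xs = U \<and> distinct xs)"

fun lineage_env :: "'c list \<Rightarrow> (nat \<Rightarrow> 'c option) \<Rightarrow> ('p, 'c) query \<Rightarrow> ('p, 'c) tuple pf" where
  "lineage_env us env (QAtom p ts) =
     (if (\<forall>t\<in>set ts. teval env t \<noteq> None)
      then PVar (p, map (\<lambda>t. the (teval env t)) ts) else PFalse)"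
| "lineage_env us env (QEq s t) =
     (case (teval env s, teval env t) of
        (Some a, Some b) \<Rightarrow> (if a = b then PTrue else PFalse)
      | _ \<Rightarrow> PFalse)"
| "lineage_env us env (QConj a b) = PAnd (lineage_env us env a) (lineage_env us env b)"
| "lineage_env us env (QDisj a b) = POr (lineage_env us env a) (lineage_env us env b)"
| "lineage_env us env (QEx x a) =
     foldr POr (map (\<lambda>c. lineage_env us (env(x := Some c)) a) us) PFalse"
| "lineage_env us env (QNeg a) = PNot (lineage_env us env a)"

definition lineage :: "'c set \<Rightarrow> ('p, 'c) query \<Rightarrow> ('p, 'c) tuple pf" where
  "lineage U Q = lineage_env (ulist U) Map.empty Q"

fun neg_only_vars :: "'v pf \<Rightarrow> bool" where
  "neg_only_vars PTrue = True"
| "neg_only_vars PFalse = True"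
| "neg_only_vars (PVar v) = True"
| "neg_only_vars (PNot a) = (case a of PVar v \<Rightarrow> True | _ \<Rightarrow> False)"
| "neg_only_vars (PAnd a b) = (neg_only_vars a \<and> neg_only_vars b)"
| "neg_only_vars (POr a b) = (neg_only_vars a \<and> neg_only_vars b)"

fun dlineage :: "'v set \<Rightarrow> 'v pf \<Rightarrow> 'v pf" where
  "dlineage D PTrue = PTrue"
| "dlineage D PFalse = PFalse"
| "dlineage D (PVar v) = (if v \<in> D then PVar v else PFalse)"
| "dlineage D (PNot a) =
     (case a of PVar v \<Rightarrow> (if v \<in> D then PFalse else PNot (PVar v))
      | _ \<Rightarrow> PNot (dlineage D a))"
| "dlineage D (PAnd a b) = PAnd (dlineage D a) (dlineage D b)"
| "dlineage D (POr a b) = POr (dlineage D a) (dlineage D b)"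

text \<open>Variables occurring with polarity b (True = positively, False = negatively).\<close>
fun occ :: "bool \<Rightarrow> 'v pf \<Rightarrow> 'v set" where
  "occ b PTrue = {}"
| "occ b PFalse = {}"
| "occ b (PVar v) = (if b then {v} else {})"
| "occ b (PNot a) = occ (\<not> b) a"
| "occ b (PAnd a b') = occ b a \<union> occ b b'"
| "occ b (POr a b') = occ b a \<union> occ b b'"

definition pvars :: "'v pf \<Rightarrow> 'v set" where
  "pvars \<phi> = occ True \<phi> \<union> occ False \<phi>"

text \<open>A truth assignment sigma on a finite variable set V is represented by the
  set S \<subseteq> V of variables it maps to 1; Omega is the powerset of V with the
  uniform distribution.\<close>
definition cond_exp :: "'v pf \<Rightarrow> 'v set set \<Rightarrow> real" where
  "cond_exp \<Phi> A = real (card {S \<in> A. peval S \<Phi>}) / real (card A)"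

text \<open>The event do(X_tau = v) intersected with do(X = 1) for exogenous positively
  occurring X and do(X = 0) for exogenous negatively occurring X.\<close>
definition do_event :: "'v set \<Rightarrow> 'v \<Rightarrow> bool \<Rightarrow> 'v set \<Rightarrow> 'v set \<Rightarrow> 'v set set" where
  "do_event V \<tau> val Xpos Xneg =
     {S. S \<subseteq> V \<and> (\<tau> \<in> S \<longleftrightarrow> val) \<and> Xpos \<subseteq> S \<and> Xneg \<inter> S = {}}"

text \<open>Causal effect of tau on Q in D = Dn \<union> Dx.  The sample space consists of
  the assignments to Var(Phi_Q(D)) together with X_tau.\<close>
definition causal_effect ::
  "'c set \<Rightarrow> ('p, 'c) tuple set \<Rightarrow> ('p, 'c) tuple set \<Rightarrow> ('p, 'c) tuple
     \<Rightarrow> ('p, 'c) query \<Rightarrow> real" where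
  "causal_effect U Dn Dx \<tau> Q =
    (let D = Dn \<union> Dx;
         \<Phi> = dlineage D (lineage U Q);
         V = pvars \<Phi> \<union> {\<tau>};
         Xpos = occ True \<Phi> \<inter> Dx;
         Xneg = occ False \<Phi> \<inter> Dx;
         v = (\<tau> \<in> D)
     in cond_exp \<Phi> (do_event V \<tau> v Xpos Xneg)
        - cond_exp \<Phi> (do_event V \<tau> (\<not> v) Xpos Xneg))"

end

theory Submission
  imports Defs
begin

text \<open>Since negation occurs only in front of variables, an endogenous tuple
  \<open>\<tau> \<in> D\<close> can occur in the D-lineage only positively.  The lineage is therefore
  monotone in \<open>X\<^sub>\<tau>\<close>, and \<open>S \<mapsto> S \<union> {\<tau>}\<close> is a bijection from the event
  \<open>do(X\<^sub>\<tau> = 0)\<close> onto \<open>do(X\<^sub>\<tau> = 1)\<close> (the exogenous constraints never mention \<open>\<tau>\<close>)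
  that maps satisfying assignments to satisfying ones.\<close>

lemma finite_occ: "finite (occ b \<phi>)"
  by (induction \<phi> arbitrary: b) auto

lemma peval_insert_monotone:
  "(\<tau> \<notin> occ False \<phi> \<longrightarrow> peval S \<phi> \<longrightarrow> peval (insert \<tau> S) \<phi>) \<and>
   (\<tau> \<notin> occ True \<phi> \<longrightarrow> peval (insert \<tau> S) \<phi> \<longrightarrow> peval S \<phi>)"
  by (induction \<phi>) auto

lemma occ_False_dlineage_disjoint:
  "neg_only_vars L \<Longrightarrow> occ False (dlineage D L) \<inter> D = {}"
proof (induction L)
  case (PNot a)
  then show ?case by (cases a) auto
qed auto

lemma cond_exp_mono_bij:
  assumes "bij_betw f A B" and "finite B"
    and "\<And>S. S \<in> A \<Longrightarrow> peval S \<Phi> \<Longrightarrow> peval (f S) \<Phi>"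
  shows "cond_exp \<Phi> A \<le> cond_exp \<Phi> B"
proof -
  have inj: "inj_on f A" and img: "f ` A = B"
    using assms(1) by (auto simp: bij_betw_def)
  have "card {S \<in> A. peval S \<Phi>} = card (f ` {S \<in> A. peval S \<Phi>})"
    by (rule card_image[symmetric]) (rule inj_on_subset[OF inj], auto)
  also have "\<dots> \<le> card {S \<in> B. peval S \<Phi>}"
    by (rule card_mono) (use assms(2,3) img in auto)
  finally show ?thesis
    unfolding cond_exp_def bij_betw_same_card[OF assms(1)]
    by (simp add: divide_right_mono)
qed

lemma finite_do_event: "finite V \<Longrightarrow> finite (do_event V \<tau> val Xpos Xneg)"
  unfolding do_event_def by (rule finite_subset[of _ "Pow V"]) auto

lemma bij_betw_insert_do_event:
  assumes "\<tau> \<in> V" and "\<tau> \<notin> Xpos" and "\<tau> \<notin> Xneg"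
  shows "bij_betw (insert \<tau>) (do_event V \<tau> False Xpos Xneg) (do_event V \<tau> True Xpos Xneg)"
proof (rule bij_betw_imageI)
  show "inj_on (insert \<tau>) (do_event V \<tau> False Xpos Xneg)"
    unfolding do_event_def inj_on_def by auto
  show "insert \<tau> ` do_event V \<tau> False Xpos Xneg = do_event V \<tau> True Xpos Xneg"
  proof
    show "insert \<tau> ` do_event V \<tau> False Xpos Xneg \<subseteq> do_event V \<tau> True Xpos Xneg"
      using assms unfolding do_event_def by auto
    show "do_event V \<tau> True Xpos Xneg \<subseteq> insert \<tau> ` do_event V \<tau> False Xpos Xneg"
    proof
      fix S assume S: "S \<in> do_event V \<tau> True Xpos Xneg"
      then have "S - {\<tau>} \<in> do_event V \<tau> False Xpos Xneg" and "S = insert \<tau> (S - {\<tau>})"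
        using assms unfolding do_event_def by auto
      then show "S \<in> insert \<tau> ` do_event V \<tau> False Xpos Xneg" by blast
    qed
  qed
qed

lemma cond_exp_do_event_mono:
  assumes "finite V" and "\<tau> \<in> V" and "\<tau> \<notin> Xpos" and "\<tau> \<notin> Xneg"
    and "\<tau> \<notin> occ False \<Phi>"
  shows "cond_exp \<Phi> (do_event V \<tau> False Xpos Xneg) \<le> cond_exp \<Phi> (do_event V \<tau> True Xpos Xneg)"
  using bij_betw_insert_do_event[OF assms(2-4)] finite_do_event[OF assms(1)]
  by (rule cond_exp_mono_bij) (use assms(5) peval_insert_monotone[of \<tau> \<Phi>] in blast)

theorem proposition1:
  fixes U :: "'c set" and P :: "'p set" and ar :: "'p \<Rightarrow> nat"
    and Dn Dx :: "('p, 'c) tuple set" and Q :: "('p, 'c) query"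
    and \<tau> :: "('p, 'c) tuple"
  assumes "finite U" and "finite P"
    and "finite (Dn \<union> Dx)" and "Dn \<inter> Dx = {}"
    and "\<forall>t \<in> Dn \<union> Dx. wf_tuple U P ar t"
    and "wf_query U P ar Q" and "fv Q = {}"
    and "neg_only_vars (lineage U Q)"
    and "occ True (dlineage (Dn \<union> Dx) (lineage U Q))
         \<inter> occ False (dlineage (Dn \<union> Dx) (lineage U Q)) = {}"
    and "\<tau> \<in> Dn"
  shows "causal_effect U Dn Dx \<tau> Q \<ge> 0"
proof -
  define \<Phi> where "\<Phi> = dlineage (Dn \<union> Dx) (lineage U Q)"
  have "\<tau> \<notin> occ False \<Phi>"
    using occ_False_dlineage_disjoint[OF assms(8)] assms(10) unfolding \<Phi>_def by blast
  moreover have "\<tau> \<notin> Dx" using assms(4,10) by blast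
  moreover have "finite (pvars \<Phi> \<union> {\<tau>})" by (simp add: pvars_def finite_occ)
  ultimately have "cond_exp \<Phi> (do_event (pvars \<Phi> \<union> {\<tau>}) \<tau> False (occ True \<Phi> \<inter> Dx) (occ False \<Phi> \<inter> Dx))
      \<le> cond_exp \<Phi> (do_event (pvars \<Phi> \<union> {\<tau>}) \<tau> True (occ True \<Phi> \<inter> Dx) (occ False \<Phi> \<inter> Dx))"
    by (intro cond_exp_do_event_mono) auto
  then show ?thesis
    using assms(10) unfolding causal_effect_def Let_def \<Phi>_def by simp
qed

end
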